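(* Let $I\subseteq\mathbb{R}$ be an interval with nonempty interior. There is no mean on $I$ of type $\mathcal{T}_1$. Equivalently, there do not exist continuous functions $F\colon I\to\mathbb{R}$ and $G\colon \omega F(I)\to I$ such that $\mathscr{L}_{F,G}$ is a mean on $I$.
   Context: A mean on an interval $I$ is a function $\mathscr{M}\colon\bigcup_{n=1}^\infty I^n\to I$ with $\min(a)\le\mathscr{M}(a)\le\max(a)$ for every $a\in\bigcup_{n\ge1}I^n$. For a commutative semigroup $(Y,+)$ and $F\colon I\to Y$, let $\omega F(I):=\bigcup_{n=1}^\infty\{F(x_1)+\cdots+F(x_n): x_1,\dots,x_n\in I\}$. For $G\colon\omega F(I)\to I$ define $\mathscr{L}_{F,G}\colon\bigcup_{n\ge1}I^n\to I$ by $\mathscr{L}_{F,G}(a_1,\dots,a_n):=G(F(a_1)+\cdots+F(a_n))$. A mean $\mathscr{M}$ on $I$ is of type $\mathcal{T}_k$ ($k\in\mathbb{N}$) if $\mathscr{M}=\mathscr{L}_{F,G}$ for some continuous $F\colon I\to(\mathbb{R}^k,+)$ and some continuous $G\colon\omega F(I)\to I$ ($\omega F(I)$ carrying the subspace topology). *)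

theory Defs
  imports "HOL-Analysis.Analysis"
begin

text \<open>Finite tuples \<open>(a_1,...,a_n)\<close>, n \<ge> 1, are represented by nonempty lists.\<close>

definition is_mean_on :: "real set \<Rightarrow> (real list \<Rightarrow> real) \<Rightarrow> bool" where
  "is_mean_on I M \<longleftrightarrow>
     (\<forall>a. a \<noteq> [] \<and> set a \<subseteq> I \<longrightarrow>
        M a \<in> I \<and> Min (set a) \<le> M a \<and> M a \<le> Max (set a))"

definition omegaF :: "('a \<Rightarrow> 'b::comm_monoid_add) \<Rightarrow> 'a set \<Rightarrow> 'b set" where
  "omegaF F I = {sum_list (map F xs) | xs. xs \<noteq> [] \<and> set xs \<subseteq> I}"

definition L_FG :: "('a \<Rightarrow> 'b::comm_monoid_add) \<Rightarrow> ('b \<Rightarrow> 'c) \<Rightarrow> 'a list \<Rightarrow> 'c" where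
  "L_FG F G a = G (sum_list (map F a))"

end

theory Submission
  imports Defs
begin

text \<open>
  If \<open>L_FG F G\<close> is a mean, then evaluating it on the constant tuple \<open>(x,...,x)\<close> of length \<open>n\<close>
  gives \<open>G (n * F x) = x\<close> for every \<open>x \<in> I\<close> and \<open>n \<ge> 1\<close>. Hence \<open>F\<close> is injective on \<open>I\<close>.
\<close>

lemma mean_on_replicate:
  assumes "is_mean_on I M" "x \<in> I" "n > 0"
  shows "M (replicate n x) = x"
proof -
  have "replicate n x \<noteq> []" "set (replicate n x) = {x}"
    using \<open>n > 0\<close> by auto
  with assms(1,2) have "Min {x} \<le> M (replicate n x) \<and> M (replicate n x) \<le> Max {x}"
    unfolding is_mean_on_def by (metis empty_subsetI insert_subset)
  then show ?thesis by simp
qed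

lemma L_FG_replicate: "L_FG F G (replicate n x) = G (real n * F x)"
  unfolding L_FG_def by (simp add: sum_list_replicate)

lemma mean_L_FG_inverts_multiples:
  assumes "is_mean_on I (L_FG F G)" "x \<in> I" "n > 0"
  shows "G (real n * F x) = x"
  using mean_on_replicate[OF assms] by (simp add: L_FG_replicate)

lemma interior_nonempty_obtains_distinct:
  fixes I :: "real set"
  assumes "interior I \<noteq> {}"
  obtains x y where "x \<in> I" "y \<in> I" "x \<noteq> y"
proof -
  obtain c where "c \<in> interior I"
    using assms by blast
  then obtain e where "e > 0" "ball c e \<subseteq> I"
    by (auto simp: mem_interior)
  then have "c \<in> I" "c + e/2 \<in> I" "c \<noteq> c + e/2"
    by (auto simp: dist_real_def)
  then show ?thesis
    using that by blast
qed

text \<open>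
  Take \<open>t\<close> to be the one of \<open>a, b\<close> with larger absolute value and \<open>s\<close> the other one. Then
  \<open>c = t / (t - s) \<ge> 0\<close>, and for \<open>n \<ge> c\<close> the point \<open>n/(n+1) * t\<close> is the convex combination of
  \<open>t\<close> and \<open>s\<close> with weight \<open>c/(n+1) \<le> 1\<close> on \<open>s\<close>.
\<close>
lemma interval_contains_contracted_point:
  fixes J :: "real set"
  assumes "is_interval J" "a \<in> J" "b \<in> J" "a \<noteq> b"
  obtains t n where "t \<in> J" "t \<noteq> 0" "n > 0" "real n / real (Suc n) * t \<in> J"
proof -
  have "\<exists>t s. t \<in> J \<and> s \<in> J \<and> t \<noteq> s \<and> \<bar>s\<bar> \<le> \<bar>t\<bar>"
  proof (cases "\<bar>b\<bar> \<le> \<bar>a\<bar>")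
    case True
    then show ?thesis using assms(2-4) by blast
  next
    case False
    then show ?thesis using assms(2-4) by (intro exI[of _ b] exI[of _ a]) auto
  qed
  then obtain t s where ts: "t \<in> J" "s \<in> J" "t \<noteq> s" "\<bar>s\<bar> \<le> \<bar>t\<bar>"
    by blast
  define c where "c = t / (t - s)"
  have "t * s \<le> \<bar>t\<bar> * \<bar>s\<bar>"
    by (simp add: abs_mult[symmetric])
  also have "\<dots> \<le> \<bar>t\<bar> * \<bar>t\<bar>"
    by (rule mult_left_mono[OF ts(4) abs_ge_zero])
  finally have "0 \<le> t * (t - s)"
    by (simp add: algebra_simps)
  then have c_nonneg: "0 \<le> c"
    unfolding c_def by (simp add: zero_le_divide_iff zero_le_mult_iff)
  define n where "n = Suc (nat \<lceil>c\<rceil>)"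
  define \<mu> where "\<mu> = c / real (Suc n)"
  have "c \<le> real (Suc n)"
    unfolding n_def by linarith
  then have \<mu>: "0 \<le> \<mu>" "\<mu> \<le> 1"
    using c_nonneg unfolding \<mu>_def by auto
  have "real n / real (Suc n) * t = t - t / real (Suc n)"
    by (simp add: field_simps)
  also have "\<dots> = t - \<mu> * (t - s)"
    using ts(3) unfolding \<mu>_def c_def by simp
  also have "\<dots> = (1 - \<mu>) * t + \<mu> * s"
    by (simp add: algebra_simps)
  also have "\<dots> \<in> J"
    using convexD[OF is_interval_convex[OF assms(1)] ts(1,2), of "1 - \<mu>" \<mu>] \<mu> by simp
  finally have "real n / real (Suc n) * t \<in> J" .
  moreover have "t \<noteq> 0" and "n > 0"
    using ts(3,4) n_def by auto
  ultimately show ?thesis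
    using that ts(1) by blast
qed

theorem proposition3p1:
  fixes I :: "real set"
  assumes "is_interval I" and "interior I \<noteq> {}"
  shows "\<not> (\<exists>(F :: real \<Rightarrow> real) (G :: real \<Rightarrow> real).
            continuous_on I F \<and> continuous_on (omegaF F I) G \<and>
            G ` omegaF F I \<subseteq> I \<and> is_mean_on I (L_FG F G))"
proof
  assume "\<exists>(F :: real \<Rightarrow> real) (G :: real \<Rightarrow> real).
            continuous_on I F \<and> continuous_on (omegaF F I) G \<and>
            G ` omegaF F I \<subseteq> I \<and> is_mean_on I (L_FG F G)"
  then obtain F G :: "real \<Rightarrow> real" where F: "continuous_on I F" and M: "is_mean_on I (L_FG F G)"
    by blast
  note inverse = mean_L_FG_inverts_multiples[OF M]
  obtain a b where ab: "a \<in> I" "b \<in> I" "a \<noteq> b"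
    using interior_nonempty_obtains_distinct[OF assms(2)] .
  have distinct: "F a \<noteq> F b"
    using inverse[OF ab(1), of 1] inverse[OF ab(2), of 1] ab(3) by auto
  have interval: "is_interval (F ` I)"
    using connected_continuous_image[OF F] assms(1) is_interval_connected_1 by blast
  obtain t n where t: "t \<in> F ` I" "t \<noteq> 0" "n > 0" "real n / real (Suc n) * t \<in> F ` I"
    by (rule interval_contains_contracted_point[OF interval imageI[OF ab(1)] imageI[OF ab(2)] distinct])
  obtain x y where xy: "x \<in> I" "F x = t" "y \<in> I" "F y = real n / real (Suc n) * t"
    using t(1,4) by (metis imageE)
  then have "real n * F x = real (Suc n) * F y" by simp
  then have "x = y"
    using inverse[OF xy(1) t(3)] inverse[OF xy(3), of "Suc n"] by simp
  then show False
    using xy t(2) by (simp add: field_simps)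
qed

end
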